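(* Let $\mathcal{X}$ be a right coideal of $\mathcal{U}$, $\mu\in\mathbb{C}^\times$, and let $0\ne X\in\mathcal{X}\cap[\mathcal{U}]_\mu$. Write uniquely $X=\sum_{t=0}^{N}X_tG^{(t)}$ with $N=\partial_4(X)$, each $X_t\in\mathrm{Lin}\{F^{(i)}f_\mu E^{(j)}:i,j\in\mathbb{N}_0\}$ and $X_N\ne0$. For $0\le t\le N$ let $s_{13}(t)=\max\{\partial_{13}(X_m): m\ge t,\ X_m\ne0\}$. Then $$\dim\mathcal{X}\ \ge\ \sum_{t=0}^{N}\big(s_{13}(t)+1\big).$$
   Context: Let $q\in\mathbb{C}$ be transcendental. $\mathcal{U}$ is the unital algebra generated by $E,F,G,f_\mu$ ($\mu\in\mathbb{C}^\times$) with relations $f_\mu f_\nu=f_{\mu\nu}$, $f_\mu E=\mu^2Ef_\mu$, $f_\mu F=\mu^{-2}Ff_\mu$, $f_\mu G=Gf_\mu$, $GE=E(G+2)$, $GF=F(G-2)$, $EF-FE=(f_q-f_{q^{-1}})/(q-q^{-1})$, $f_1=1$; $K=f_{q^{1/2}}$ for a fixed square root; Hopf structure $\Delta E=E\otimes K+K^{-1}\otimes E$, $\Delta F=F\otimes K+K^{-1}\otimes F$, $\Delta G=1\otimes G+G\otimes1$, $\Delta f_\mu=f_\mu\otimes f_\mu$. With $[k]=(q^k-q^{-k})/(q-q^{-1})$, $F^{(k)}=F^kK^{-k}/[k]!$, $E^{(k)}=K^{-k}E^k/[k]!$, $G^{(k)}=G^k/k!$, the elements $F^{(i)}f_\mu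 E^{(j)}G^{(k)}$ form a basis of $\mathcal{U}$; $[\mathcal{U}]_\mu=\mathrm{Lin}\{F^{(i)}f_\mu E^{(j)}G^{(k)}:i,j,k\in\mathbb{N}_0\}$. For a basis element $Y=F^{(i)}f_\mu E^{(j)}G^{(k)}$ put $\partial_{13}(Y)=i+j$, $\partial_4(Y)=k$, and for a finite linear combination of basis elements with nonzero coefficients take the maximum over the occurring basis elements. A right coideal is a subspace $\mathcal{X}$ with $\Delta(\mathcal{X})\subset\mathcal{X}\otimes\mathcal{U}$. *)

theory Defs
  imports Complex_Main "HOL-Library.Function_Algebras" "HOL-Computational_Algebra.Polynomial"
begin

text \<open>Concrete model of the underlying vector space of U: a basis element
  F^(i) f_mu E^(j) G^(k) is indexed by (i, mu, j, k) with mu nonzero; elements of U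
  are finitely supported coefficient functions on such indices.
  The multiplication of U is a parameter m, constrained by hypotheses
  (bilinear, associative, unital, defining relations, PBW identification of the basis),
  which determine it uniquely.\<close>

type_synonym idx = "nat \<times> complex \<times> nat \<times> nat"
type_synonym U = "idx \<Rightarrow> complex"
type_synonym UU = "idx \<times> idx \<Rightarrow> complex"

definition supp :: "('a \<Rightarrow> complex) \<Rightarrow> 'a set" where
  "supp f = {b. f b \<noteq> 0}"

definition sc :: "complex \<Rightarrow> ('a \<Rightarrow> complex) \<Rightarrow> ('a \<Rightarrow> complex)" where
  "sc c f = (\<lambda>x. c * f x)"

definition valid_idx :: "idx \<Rightarrow> bool" where
  "valid_idx b \<longleftrightarrow> fst (snd b) \<noteq> 0"

definition Uvec :: "U set" where
  "Uvec = {x. finite (supp x) \<and> (\<forall>b\<in>supp x. valid_idx b)}"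

definition UUvec :: "UU set" where
  "UUvec = {z. finite (supp z) \<and> (\<forall>p\<in>supp z. valid_idx (fst p) \<and> valid_idx (snd p))}"

definition bas :: "idx \<Rightarrow> U" where
  "bas b = (\<lambda>c. if c = b then 1 else 0)"

definition tensor :: "U \<Rightarrow> U \<Rightarrow> UU" where
  "tensor x y = (\<lambda>p. x (fst p) * y (snd p))"

definition lin :: "('a \<Rightarrow> complex) set \<Rightarrow> ('a \<Rightarrow> complex) set" where
  "lin S = {y. \<exists>A c. finite A \<and> A \<subseteq> S \<and> y = (\<Sum>a\<in>A. sc (c a) a)}"

definition lin_indep :: "('a \<Rightarrow> complex) set \<Rightarrow> bool" where
  "lin_indep B \<longleftrightarrow> finite B \<and>
     (\<forall>c. (\<Sum>b\<in>B. sc (c b) b) = 0 \<longrightarrow> (\<forall>b\<in>B. c b = 0))"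

definition subspace_U :: "U set \<Rightarrow> bool" where
  "subspace_U X \<longleftrightarrow> X \<subseteq> Uvec \<and> 0 \<in> X \<and> (\<forall>x\<in>X. \<forall>y\<in>X. x + y \<in> X)
     \<and> (\<forall>c. \<forall>x\<in>X. sc c x \<in> X)"

definition mt :: "(U \<Rightarrow> U \<Rightarrow> U) \<Rightarrow> UU \<Rightarrow> UU \<Rightarrow> UU" where
  "mt m z w = (\<Sum>p\<in>supp z. \<Sum>r\<in>supp w.
      sc (z p * w r) (tensor (m (bas (fst p)) (bas (fst r))) (m (bas (snd p)) (bas (snd r)))))"

definition pow :: "('a \<Rightarrow> 'a \<Rightarrow> 'a) \<Rightarrow> 'a \<Rightarrow> 'a \<Rightarrow> nat \<Rightarrow> 'a" where
  "pow mul one x n = ((mul x) ^^ n) one"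

definition qint :: "complex \<Rightarrow> nat \<Rightarrow> complex" where
  "qint q k = (q ^ k - inverse q ^ k) / (q - inverse q)"

definition qfact :: "complex \<Rightarrow> nat \<Rightarrow> complex" where
  "qfact q k = (\<Prod>i=1..k. qint q i)"

text \<open>Distinguished elements of U; kappa is the fixed square root of q, K = f_kappa.\<close>
definition fel :: "complex \<Rightarrow> U" where "fel \<mu> = bas (0, \<mu>, 0, 0)"
definition uone :: U where "uone = fel 1"
definition Kel :: "complex \<Rightarrow> U" where "Kel \<kappa> = fel \<kappa>"
definition Kinv :: "complex \<Rightarrow> U" where "Kinv \<kappa> = fel (inverse \<kappa>)"
definition Gel :: U where "Gel = bas (0, 1, 0, 1)"
text \<open>E^(1) = K^-1 E is the basis element (0,1,1,0), hence E = K E^(1);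
  F^(1) = F K^-1 is the basis element (1,1,0,0), hence F = F^(1) K.\<close>
definition Eel :: "(U \<Rightarrow> U \<Rightarrow> U) \<Rightarrow> complex \<Rightarrow> U" where
  "Eel m \<kappa> = m (Kel \<kappa>) (bas (0, 1, 1, 0))"
definition Fel :: "(U \<Rightarrow> U \<Rightarrow> U) \<Rightarrow> complex \<Rightarrow> U" where
  "Fel m \<kappa> = m (bas (1, 1, 0, 0)) (Kel \<kappa>)"

definition Fdiv :: "(U \<Rightarrow> U \<Rightarrow> U) \<Rightarrow> complex \<Rightarrow> complex \<Rightarrow> nat \<Rightarrow> U" where
  "Fdiv m q \<kappa> i = sc (inverse (qfact q i))
      (m (pow m uone (Fel m \<kappa>) i) (pow m uone (Kinv \<kappa>) i))"
definition Ediv :: "(U \<Rightarrow> U \<Rightarrow> U) \<Rightarrow> complex \<Rightarrow> complex \<Rightarrow> nat \<Rightarrow> U" where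
  "Ediv m q \<kappa> j = sc (inverse (qfact q j))
      (m (pow m uone (Kinv \<kappa>) j) (pow m uone (Eel m \<kappa>) j))"
definition Gdiv :: "(U \<Rightarrow> U \<Rightarrow> U) \<Rightarrow> nat \<Rightarrow> U" where
  "Gdiv m k = sc (inverse (fact k)) (pow m uone Gel k)"

definition U_algebra :: "complex \<Rightarrow> complex \<Rightarrow> (U \<Rightarrow> U \<Rightarrow> U) \<Rightarrow> bool" where
  "U_algebra q \<kappa> m \<longleftrightarrow>
     (\<forall>a b. valid_idx a \<longrightarrow> valid_idx b \<longrightarrow> m (bas a) (bas b) \<in> Uvec)
   \<and> (\<forall>x\<in>Uvec. \<forall>y\<in>Uvec. m x y = (\<Sum>a\<in>supp x. \<Sum>b\<in>supp y. sc (x a * y b) (m (bas a) (bas b))))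
   \<and> (\<forall>x\<in>Uvec. \<forall>y\<in>Uvec. \<forall>z\<in>Uvec. m (m x y) z = m x (m y z))
   \<and> (\<forall>x\<in>Uvec. m uone x = x \<and> m x uone = x)
   \<and> (\<forall>\<mu> \<nu>. \<mu> \<noteq> 0 \<longrightarrow> \<nu> \<noteq> 0 \<longrightarrow> m (fel \<mu>) (fel \<nu>) = fel (\<mu> * \<nu>))
   \<and> (\<forall>\<mu>. \<mu> \<noteq> 0 \<longrightarrow> m (fel \<mu>) (Eel m \<kappa>) = sc (\<mu>\<^sup>2) (m (Eel m \<kappa>) (fel \<mu>)))
   \<and> (\<forall>\<mu>. \<mu> \<noteq> 0 \<longrightarrow> m (fel \<mu>) (Fel m \<kappa>) = sc (inverse (\<mu>\<^sup>2)) (m (Fel m \<kappa>) (fel \<mu>)))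
   \<and> (\<forall>\<mu>. \<mu> \<noteq> 0 \<longrightarrow> m (fel \<mu>) Gel = m Gel (fel \<mu>))
   \<and> m Gel (Eel m \<kappa>) = m (Eel m \<kappa>) (Gel + sc 2 uone)
   \<and> m Gel (Fel m \<kappa>) = m (Fel m \<kappa>) (Gel - sc 2 uone)
   \<and> m (Eel m \<kappa>) (Fel m \<kappa>) - m (Fel m \<kappa>) (Eel m \<kappa>)
       = sc (inverse (q - inverse q)) (fel q - fel (inverse q))
   \<and> (\<forall>i \<mu> j k. \<mu> \<noteq> 0 \<longrightarrow>
        bas (i, \<mu>, j, k) = m (m (m (Fdiv m q \<kappa> i) (fel \<mu>)) (Ediv m q \<kappa> j)) (Gdiv m k))"

text \<open>The coproduct: algebra map with the given values on generators, i.e. on the basis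
  element F^(i) f_mu E^(j) G^(k) it is Delta(F^(i)) Delta(f_mu) Delta(E^(j)) Delta(G^(k)),
  extended linearly.\<close>
definition tone :: "UU" where "tone = tensor uone uone"

definition Delta_bas :: "(U \<Rightarrow> U \<Rightarrow> U) \<Rightarrow> complex \<Rightarrow> complex \<Rightarrow> idx \<Rightarrow> UU" where
  "Delta_bas m q \<kappa> b = (case b of (i, \<mu>, j, k) \<Rightarrow>
     (let DK = tensor (Kel \<kappa>) (Kel \<kappa>);
          DKi = tensor (Kinv \<kappa>) (Kinv \<kappa>);
          DE = tensor (Eel m \<kappa>) (Kel \<kappa>) + tensor (Kinv \<kappa>) (Eel m \<kappa>);
          DF = tensor (Fel m \<kappa>) (Kel \<kappa>) + tensor (Kinv \<kappa>) (Fel m \<kappa>);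
          DG = tensor uone Gel + tensor Gel uone;
          Df = tensor (fel \<mu>) (fel \<mu>);
          DFd = sc (inverse (qfact q i)) (mt m (pow (mt m) tone DF i) (pow (mt m) tone DKi i));
          DEd = sc (inverse (qfact q j)) (mt m (pow (mt m) tone DKi j) (pow (mt m) tone DE j));
          DGd = sc (inverse (fact k)) (pow (mt m) tone DG k)
      in mt m (mt m (mt m DFd Df) DEd) DGd))"

definition Delta :: "(U \<Rightarrow> U \<Rightarrow> U) \<Rightarrow> complex \<Rightarrow> complex \<Rightarrow> U \<Rightarrow> UU" where
  "Delta m q \<kappa> x = (\<Sum>b\<in>supp x. sc (x b) (Delta_bas m q \<kappa> b))"

definition right_coideal :: "(U \<Rightarrow> U \<Rightarrow> U) \<Rightarrow> complex \<Rightarrow> complex \<Rightarrow> U set \<Rightarrow> bool" where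
  "right_coideal m q \<kappa> X \<longleftrightarrow> subspace_U X \<and>
     (\<forall>x\<in>X. Delta m q \<kappa> x \<in> lin {tensor y u | y u. y \<in> X \<and> u \<in> Uvec})"

definition Umu :: "complex \<Rightarrow> U set" where
  "Umu \<mu> = {x \<in> Uvec. \<forall>b\<in>supp x. fst (snd b) = \<mu>}"

definition d13 :: "U \<Rightarrow> nat" where
  "d13 Y = Max ((\<lambda>b. fst b + fst (snd (snd b))) ` supp Y)"
definition d4 :: "U \<Rightarrow> nat" where
  "d4 Y = Max ((\<lambda>b. snd (snd (snd b))) ` supp Y)"

text \<open>The coefficient X_t in X = sum_t X_t G^(t): X_t is in Lin{F^(i) f_mu E^(j)}, i.e.
  supported on indices with k = 0, and X_t G^(t) is the part of X with G-degree t.\<close>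
definition Xcoef :: "U \<Rightarrow> nat \<Rightarrow> U" where
  "Xcoef X t = (\<lambda>(i, \<mu>, j, k). if k = 0 then X (i, \<mu>, j, t) else 0)"

definition s13 :: "U \<Rightarrow> nat \<Rightarrow> nat" where
  "s13 X t = Max {d13 (Xcoef X m') | m'. m' \<ge> t \<and> Xcoef X m' \<noteq> 0}"

text \<open>dim X \<ge> n (X possibly infinite-dimensional).\<close>
definition dim_ge :: "U set \<Rightarrow> nat \<Rightarrow> bool" where
  "dim_ge X n \<longleftrightarrow> (\<exists>B\<subseteq>X. lin_indep B \<and> card B = n)"

end

theory Submission
  imports Defs
begin

text \<open>
  The coproduct of a basis element F^(i) f_mu E^(j) G^(k) is the sum over a <= i, b <= j,
  c <= k of F^(a) f_lambda E^(b) G^(c) \<otimes> F^(i-a) f_mu E^(j-b) G^(k-c), where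
  lambda = mu q^-(i-a+j-b). Hence, for X in [U]_mu, the coefficient of the basis element
  (i', mu, j', k') in the right tensor factor of Delta X lies in every right coideal
  containing X: it is X shifted down by (i', j', k') and moved to the label mu q^-(i'+j').

  For t <= N and w <= s13(t), take this slice with k' = t and i' + j' = w, splitting w
  along a monomial of X of F,E-degree s13(t) in the largest G-degree m >= t at which
  s13(t) is attained. As q is transcendental, slices with different w live on different
  labels; for equal w, the image of that monomial is a pivot at which every slice with
  larger t vanishes, by the maximality of m. So these sum_t (s13(t) + 1) slices form a
  triangular, hence linearly independent, family.
\<close>

lemma sum_fun_apply: "(\<Sum>a\<in>A. f a) x = (\<Sum>a\<in>A. f a x)"
  by (induction A rule: infinite_finite_induct) auto

lemma sum_product: "sum f (A \<times> B) = (\<Sum>a\<in>A. \<Sum>b\<in>B. f (a, b))"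
  by (simp add: sum.cartesian_product)

lemma sum_eq_single:
  assumes "finite S" and "\<And>x. x \<in> S \<Longrightarrow> x \<noteq> z \<Longrightarrow> f x = 0"
  shows "sum f S = (if z \<in> S then f z else 0)"
proof (cases "z \<in> S")
  case True
  then have "sum f S = f z + sum f (S - {z})"
    using assms(1) by (simp add: sum.remove)
  also have "sum f (S - {z}) = 0"
    using assms(2) by (intro sum.neutral) auto
  finally show ?thesis
    using True by simp
next
  case False
  then have "sum f S = 0"
    using assms(2) by (intro sum.neutral) blast
  with False show ?thesis
    by simp
qed

lemma sc_apply: "sc c f x = c * f x"
  by (simp add: sc_def)

lemma sc_one [simp]: "sc 1 f = f"
  and sc_zero_left [simp]: "sc 0 f = 0"
  and sc_sc [simp]: "sc a (sc b f) = sc (a * b) f"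
  by (simp_all add: sc_def fun_eq_iff)

lemma sc_add_right: "sc a (f + g) = sc a f + sc a g"
  by (simp add: sc_def fun_eq_iff algebra_simps)

lemma sc_add_left: "sc (a + b) f = sc a f + sc b f"
  by (simp add: sc_def fun_eq_iff algebra_simps)

lemma sc_sum: "sc a (\<Sum>i\<in>I. f i) = (\<Sum>i\<in>I. sc a (f i))"
  by (simp add: sc_def fun_eq_iff sum_fun_apply sum_distrib_left)

lemma sum_sum_supp_extend:
  assumes "finite A" "supp x \<subseteq> A" "finite B" "supp y \<subseteq> B"
  shows "(\<Sum>a\<in>supp x. \<Sum>b\<in>supp y. sc (x a * y b) (F a b))
       = (\<Sum>a\<in>A. \<Sum>b\<in>B. sc (x a * y b) (F a b))"
proof -
  have "(\<Sum>a\<in>supp x. \<Sum>b\<in>supp y. sc (x a * y b) (F a b))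
      = (\<Sum>a\<in>supp x. \<Sum>b\<in>B. sc (x a * y b) (F a b))"
    by (intro sum.cong refl sum.mono_neutral_left) (use assms in \<open>auto simp: supp_def\<close>)
  also have "\<dots> = (\<Sum>a\<in>A. \<Sum>b\<in>B. sc (x a * y b) (F a b))"
    by (intro sum.mono_neutral_left) (use assms in \<open>auto simp: supp_def\<close>)
  finally show ?thesis .
qed

lemma supp_add: "supp (f + g) \<subseteq> supp f \<union> supp g"
  by (auto simp: supp_def)

lemma supp_sc: "supp (sc c f) \<subseteq> supp f"
  by (auto simp: supp_def sc_def)

lemma supp_sum: "supp (\<Sum>i\<in>I. f i) \<subseteq> (\<Union>i\<in>I. supp (f i))"
  by (auto simp: supp_def sum_fun_apply intro: sum.neutral)

lemma supp_tensor: "supp (tensor x y) = supp x \<times> supp y"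
  by (auto simp: supp_def tensor_def)

lemma supp_bas: "supp (bas b) = {b}"
  by (simp add: supp_def bas_def)

lemma finite_supp_add: "finite (supp f) \<Longrightarrow> finite (supp g) \<Longrightarrow> finite (supp (f + g))"
  by (meson finite_Un finite_subset supp_add)

lemma finite_supp_sum:
  assumes "\<And>i. i \<in> I \<Longrightarrow> finite (supp (f i))"
  shows "finite (supp (\<Sum>i\<in>I. f i))"
proof (cases "finite I")
  case True
  then show ?thesis
    using assms by (intro finite_subset[OF supp_sum]) auto
qed (simp add: supp_def)

lemma tensor_apply [simp]: "tensor x y (a, b) = x a * y b"
  by (simp add: tensor_def)

lemma tensor_sc_left: "tensor (sc c x) y = sc c (tensor x y)"
  and tensor_sc_right: "tensor x (sc c y) = sc c (tensor x y)"
  by (simp_all add: tensor_def sc_def fun_eq_iff algebra_simps)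

lemma finite_supp_tensor: "x \<in> Uvec \<Longrightarrow> y \<in> Uvec \<Longrightarrow> finite (supp (tensor x y))"
  by (simp add: Uvec_def supp_tensor)

lemma Uvec_zero: "0 \<in> Uvec"
  by (simp add: Uvec_def supp_def)

lemma Uvec_add: "x \<in> Uvec \<Longrightarrow> y \<in> Uvec \<Longrightarrow> x + y \<in> Uvec"
  unfolding Uvec_def using supp_add[of x y] by (auto intro: finite_subset)

lemma Uvec_sc: "x \<in> Uvec \<Longrightarrow> sc c x \<in> Uvec"
  unfolding Uvec_def using supp_sc[of c x] by (auto intro: finite_subset)

lemma Uvec_sum: "(\<And>i. i \<in> I \<Longrightarrow> f i \<in> Uvec) \<Longrightarrow> (\<Sum>i\<in>I. f i) \<in> Uvec"
  by (induction I rule: infinite_finite_induct) (auto simp: Uvec_zero Uvec_add)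

lemma bas_in_Uvec [simp]: "\<mu> \<noteq> 0 \<Longrightarrow> bas (i, \<mu>, j, k) \<in> Uvec"
  by (simp add: Uvec_def supp_bas valid_idx_def)

lemma fel_in_Uvec [simp]: "\<mu> \<noteq> 0 \<Longrightarrow> fel \<mu> \<in> Uvec"
  by (simp add: fel_def)

lemma uone_eq_bas: "uone = bas (0, 1, 0, 0)"
  by (simp add: uone_def fel_def)

lemma uone_in_Uvec [simp]: "uone \<in> Uvec"
  and Gel_in_Uvec [simp]: "Gel \<in> Uvec"
  by (simp_all add: uone_eq_bas Gel_def)

definition lowered :: "U \<Rightarrow> complex \<Rightarrow> complex \<Rightarrow> nat \<Rightarrow> nat \<Rightarrow> nat \<Rightarrow> U" where
  "lowered X \<mu> \<eta> i' j' k' =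
    (\<lambda>(a, \<nu>, b, e). if \<nu> = \<eta> then X (a + i', \<mu>, b + j', e + k') else 0)"

lemma pow_0 [simp]: "pow mul one x 0 = one"
  and pow_Suc: "pow mul one x (Suc n) = mul x (pow mul one x n)"
  by (simp_all add: pow_def)

lemma mt_expand_superset:
  assumes "finite P" "supp z \<subseteq> P" "finite R" "supp w \<subseteq> R"
  shows "mt m z w = (\<Sum>p\<in>P. \<Sum>r\<in>R. sc (z p * w r)
            (tensor (m (bas (fst p)) (bas (fst r))) (m (bas (snd p)) (bas (snd r)))))"
  unfolding mt_def by (rule sum_sum_supp_extend[OF assms])

lemma mt_add_left:
  assumes "finite (supp z)" "finite (supp z')" "finite (supp w)"
  shows "mt m (z + z') w = mt m z w + mt m z' w"
proof -
  let ?P = "supp z \<union> supp z'"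
    and ?T = "\<lambda>p r. tensor (m (bas (fst p)) (bas (fst r))) (m (bas (snd p)) (bas (snd r)))"
  have "mt m (z + z') w = (\<Sum>p\<in>?P. \<Sum>r\<in>supp w. sc ((z + z') p * w r) (?T p r))"
    using assms supp_add[of z z'] by (intro mt_expand_superset) auto
  also have "\<dots> = (\<Sum>p\<in>?P. \<Sum>r\<in>supp w. sc (z p * w r) (?T p r))
      + (\<Sum>p\<in>?P. \<Sum>r\<in>supp w. sc (z' p * w r) (?T p r))"
    by (simp add: distrib_right sc_add_left sum.distrib)
  also have "\<dots> = mt m z w + mt m z' w"
    using assms by (simp add: mt_expand_superset[of ?P _ "supp w"])
  finally show ?thesis .
qed

lemma mt_add_right:
  assumes "finite (supp z)" "finite (supp w)" "finite (supp w')"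
  shows "mt m z (w + w') = mt m z w + mt m z w'"
proof -
  let ?R = "supp w \<union> supp w'"
    and ?T = "\<lambda>p r. tensor (m (bas (fst p)) (bas (fst r))) (m (bas (snd p)) (bas (snd r)))"
  have "mt m z (w + w') = (\<Sum>p\<in>supp z. \<Sum>r\<in>?R. sc (z p * (w + w') r) (?T p r))"
    using assms supp_add[of w w'] by (intro mt_expand_superset) auto
  also have "\<dots> = (\<Sum>p\<in>supp z. \<Sum>r\<in>?R. sc (z p * w r) (?T p r))
      + (\<Sum>p\<in>supp z. \<Sum>r\<in>?R. sc (z p * w' r) (?T p r))"
    by (simp add: distrib_left sc_add_left sum.distrib)
  also have "\<dots> = mt m z w + mt m z w'"
    using assms by (simp add: mt_expand_superset[of "supp z" _ ?R])
  finally show ?thesis .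
qed

lemma mt_sc_left: "finite (supp z) \<Longrightarrow> finite (supp w) \<Longrightarrow> mt m (sc c z) w = sc c (mt m z w)"
  using supp_sc[of c z]
  by (subst mt_expand_superset[where P = "supp z" and R = "supp w"])
    (auto simp: mt_def sc_sum sc_apply mult.assoc)

lemma mt_sc_right: "finite (supp z) \<Longrightarrow> finite (supp w) \<Longrightarrow> mt m z (sc c w) = sc c (mt m z w)"
  using supp_sc[of c w]
  by (subst mt_expand_superset[where P = "supp z" and R = "supp w"])
    (auto simp: mt_def sc_sum sc_apply mult.left_commute)

lemma mt_sum_left:
  "(\<And>i. i \<in> I \<Longrightarrow> finite (supp (f i))) \<Longrightarrow> finite (supp w) \<Longrightarrow>
   mt m (\<Sum>i\<in>I. f i) w = (\<Sum>i\<in>I. mt m (f i) w)"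
proof (induction I rule: infinite_finite_induct)
  case (insert i I)
  then have "mt m (f i + sum f I) w = mt m (f i) w + mt m (sum f I) w"
    by (intro mt_add_left) (auto intro: finite_supp_sum)
  moreover have "mt m (sum f I) w = (\<Sum>i\<in>I. mt m (f i) w)"
    using insert by simp
  ultimately show ?case
    by (simp only: sum.insert[OF insert.hyps])
qed (simp_all add: mt_def)

lemma mt_sum_right:
  "(\<And>i. i \<in> I \<Longrightarrow> finite (supp (f i))) \<Longrightarrow> finite (supp z) \<Longrightarrow>
   mt m z (\<Sum>i\<in>I. f i) = (\<Sum>i\<in>I. mt m z (f i))"
proof (induction I rule: infinite_finite_induct)
  case (insert i I)
  then have "mt m z (f i + sum f I) = mt m z (f i) + mt m z (sum f I)"
    by (intro mt_add_right) (auto intro: finite_supp_sum)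
  moreover have "mt m z (sum f I) = (\<Sum>i\<in>I. mt m z (f i))"
    using insert by simp
  ultimately show ?case
    by (simp only: sum.insert[OF insert.hyps])
qed (simp_all add: mt_def)

text \<open>An abstract form of the (q-)binomial theorem in U \<otimes> U.\<close>

lemma mt_power_expansion:
  fixes T :: "nat \<Rightarrow> nat \<Rightarrow> UU" and c :: "nat \<Rightarrow> complex" and \<alpha> \<beta> :: "nat \<Rightarrow> nat \<Rightarrow> complex"
  assumes finite_x: "finite (supp x)"
    and finite_T: "\<And>n a. finite (supp (T n a))"
    and T_0: "T 0 0 = tone"
    and step: "\<And>n a. a \<le> n \<Longrightarrow>
      mt m x (T n a) = sc (\<alpha> n (Suc a)) (T (Suc n) (Suc a)) + sc (\<beta> n a) (T (Suc n) a)"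
    and \<alpha>_0: "\<And>n. \<alpha> n 0 = 0"
    and \<beta>_top: "\<And>n. \<beta> n (Suc n) = 0"
    and pascal: "\<And>n a. a \<le> Suc n \<Longrightarrow> c n * (\<alpha> n a + \<beta> n a) = c (Suc n)"
    and c_0: "c 0 = 1"
  shows "pow (mt m) tone x n = sc (c n) (\<Sum>a\<le>n. T n a)"
proof (induction n)
  case 0
  show ?case
    using T_0 c_0 by simp
next
  case (Suc n)
  have "pow (mt m) tone x (Suc n) = sc (c n) (\<Sum>a\<le>n. mt m x (T n a))"
    using Suc finite_x finite_T
    by (simp add: pow_Suc mt_sc_right mt_sum_right finite_supp_sum)
  also have "(\<Sum>a\<le>n. mt m x (T n a))
      = (\<Sum>a\<le>n. sc (\<alpha> n (Suc a)) (T (Suc n) (Suc a))) + (\<Sum>a\<le>n. sc (\<beta> n a) (T (Suc n) a))"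
    by (simp add: step sum.distrib)
  also have "(\<Sum>a\<le>n. sc (\<alpha> n (Suc a)) (T (Suc n) (Suc a))) = (\<Sum>a\<le>Suc n. sc (\<alpha> n a) (T (Suc n) a))"
    by (subst sum.atMost_Suc_shift) (simp add: \<alpha>_0)
  also have "(\<Sum>a\<le>n. sc (\<beta> n a) (T (Suc n) a)) = (\<Sum>a\<le>Suc n. sc (\<beta> n a) (T (Suc n) a))"
    by (simp add: \<beta>_top)
  also have "sc (c n) ((\<Sum>a\<le>Suc n. sc (\<alpha> n a) (T (Suc n) a)) + (\<Sum>a\<le>Suc n. sc (\<beta> n a) (T (Suc n) a)))
      = (\<Sum>a\<le>Suc n. sc (c n * (\<alpha> n a + \<beta> n a)) (T (Suc n) a))"
    by (simp add: sc_add_right sc_sum distrib_left sc_add_left sum.distrib)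
  also have "\<dots> = sc (c (Suc n)) (\<Sum>a\<le>Suc n. T (Suc n) a)"
    unfolding sc_sum by (intro sum.cong refl) (simp add: pascal)
  finally show ?case .
qed

section \<open>q-integers and transcendence of q\<close>

lemma qint_add: "qint q (a + b) = inverse q ^ b * qint q a + q ^ a * qint q b"
proof -
  have "q ^ (a + b) - inverse q ^ (a + b)
      = inverse q ^ b * (q ^ a - inverse q ^ a) + q ^ a * (q ^ b - inverse q ^ b)"
    by (simp add: power_add algebra_simps)
  then show ?thesis
    unfolding qint_def by (simp add: add_divide_distrib)
qed

lemma qint_0 [simp]: "qint q 0 = 0"
  by (simp add: qint_def)

lemma qfact_0 [simp]: "qfact q 0 = 1"
  by (simp add: qfact_def)

lemma qfact_Suc: "qfact q (Suc n) = qfact q n * qint q (Suc n)"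
  by (simp add: qfact_def prod.nat_ivl_Suc')

lemma transcendental_power_eq_1:
  fixes q :: "'a :: field_char_0"
  assumes "\<not> algebraic q" and "q ^ n = 1"
  shows "n = 0"
proof (rule ccontr)
  assume "n \<noteq> 0"
  have "algebraic q"
    by (rule algebraic_root[where y = 1 and p = "monom 1 n"])
      (use assms(2) \<open>n \<noteq> 0\<close> in \<open>auto simp: poly_monom coeff_monom degree_monom_eq\<close>)
  with assms(1) show False ..
qed

lemma transcendental_power_inj:
  fixes q :: "'a :: field_char_0"
  assumes "\<not> algebraic q" and "q ^ m = q ^ n"
  shows "m = n"
proof -
  have "q \<noteq> 0"
    using assms(1) by auto
  have "q ^ (l - k) = 1" if "q ^ k = q ^ l" for k l
    using that \<open>q \<noteq> 0\<close> by (cases "k \<le> l") (simp_all add: power_diff)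
  then have "q ^ (n - m) = 1" "q ^ (m - n) = 1"
    using assms(2) by metis+
  then have "n - m = 0" "m - n = 0"
    using transcendental_power_eq_1[OF assms(1)] by blast+
  then show ?thesis
    by simp
qed

section \<open>The algebra U\<close>

locale transcendental_U =
  fixes q \<kappa> :: complex and m :: "U \<Rightarrow> U \<Rightarrow> U"
  assumes U_algebra: "U_algebra q \<kappa> m"
    and kappa_square: "\<kappa>\<^sup>2 = q"
    and transcendental: "\<not> algebraic q"
begin

lemma m_bas_in_Uvec [rule_format]: "\<forall>a b. valid_idx a \<longrightarrow> valid_idx b \<longrightarrow> m (bas a) (bas b) \<in> Uvec"
  using U_algebra[unfolded U_algebra_def] by (elim conjE) assumption

lemma m_expand [rule_format]: "\<forall>x\<in>Uvec. \<forall>y\<in>Uvec.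
     m x y = (\<Sum>a\<in>supp x. \<Sum>b\<in>supp y. sc (x a * y b) (m (bas a) (bas b)))"
  using U_algebra[unfolded U_algebra_def] by (elim conjE) assumption

lemma m_assoc [rule_format]: "\<forall>x\<in>Uvec. \<forall>y\<in>Uvec. \<forall>z\<in>Uvec. m (m x y) z = m x (m y z)"
  using U_algebra[unfolded U_algebra_def] by (elim conjE) assumption

lemma m_uone [simp, rule_format]: "\<forall>x\<in>Uvec. m uone x = x \<and> m x uone = x"
  using U_algebra[unfolded U_algebra_def] by (elim conjE) assumption

lemma fel_mult [rule_format]: "\<forall>\<mu> \<nu>. \<mu> \<noteq> 0 \<longrightarrow> \<nu> \<noteq> 0 \<longrightarrow> m (fel \<mu>) (fel \<nu>) = fel (\<mu> * \<nu>)"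
  using U_algebra[unfolded U_algebra_def] by (elim conjE) assumption

lemma fel_E_commute [rule_format]:
    "\<forall>\<mu>. \<mu> \<noteq> 0 \<longrightarrow> m (fel \<mu>) (Eel m \<kappa>) = sc (\<mu>\<^sup>2) (m (Eel m \<kappa>) (fel \<mu>))"
  using U_algebra[unfolded U_algebra_def] by (elim conjE) assumption

lemma fel_F_commute [rule_format]:
    "\<forall>\<mu>. \<mu> \<noteq> 0 \<longrightarrow> m (fel \<mu>) (Fel m \<kappa>) = sc (inverse (\<mu>\<^sup>2)) (m (Fel m \<kappa>) (fel \<mu>))"
  using U_algebra[unfolded U_algebra_def] by (elim conjE) assumption

lemma bas_PBW [rule_format]: "\<forall>i \<mu> j k. \<mu> \<noteq> 0 \<longrightarrow>
     bas (i, \<mu>, j, k) = m (m (m (Fdiv m q \<kappa> i) (fel \<mu>)) (Ediv m q \<kappa> j)) (Gdiv m k)"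
  using U_algebra[unfolded U_algebra_def] by (elim conjE) assumption

lemma q_nonzero: "q \<noteq> 0"
  using transcendental by auto

lemma kappa_nonzero [simp]: "\<kappa> \<noteq> 0"
  using q_nonzero kappa_square by auto

lemma kappa_power_double: "\<kappa> ^ (2 * n) = q ^ n"
  and inverse_kappa_power_double: "inverse \<kappa> ^ (2 * n) = inverse q ^ n"
  using kappa_square by (simp_all add: power_mult power_inverse)

lemma qint_nonzero:
  assumes "n > 0"
  shows "qint q n \<noteq> 0"
proof -
  have "q\<^sup>2 \<noteq> 1" and "q ^ (2 * n) \<noteq> 1"
    using transcendental_power_eq_1[OF transcendental] assms by fastforce+
  then have "q - inverse q \<noteq> 0" and "q ^ n - inverse q ^ n \<noteq> 0"
    using q_nonzero by (auto simp: field_simps power2_eq_square power_mult mult_2 power_add power_inverse)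
  then show ?thesis
    by (simp add: qint_def)
qed

lemma inverse_q_power_eq_iff [simp]: "inverse q ^ w = inverse q ^ w' \<longleftrightarrow> w = w'"
  using transcendental_power_inj[OF transcendental] by (auto simp: power_inverse)

lemma qfact_nonzero [simp]: "qfact q n \<noteq> 0"
  unfolding qfact_def using qint_nonzero by (simp add: prod_zero_iff)

lemma m_expand_superset:
  assumes "x \<in> Uvec" "y \<in> Uvec" "finite A" "supp x \<subseteq> A" "finite B" "supp y \<subseteq> B"
  shows "m x y = (\<Sum>a\<in>A. \<Sum>b\<in>B. sc (x a * y b) (m (bas a) (bas b)))"
  using m_expand[OF assms(1,2)] sum_sum_supp_extend[OF assms(3-6)] by simp

lemma m_in_Uvec [simp]:
  assumes "x \<in> Uvec" "y \<in> Uvec"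
  shows "m x y \<in> Uvec"
  unfolding m_expand[OF assms]
  by (intro Uvec_sum Uvec_sc m_bas_in_Uvec) (use assms in \<open>auto simp: Uvec_def\<close>)

lemma m_sc_left:
  assumes "x \<in> Uvec" "y \<in> Uvec"
  shows "m (sc c x) y = sc c (m x y)"
proof -
  have "m (sc c x) y = (\<Sum>a\<in>supp x. \<Sum>b\<in>supp y. sc (sc c x a * y b) (m (bas a) (bas b)))"
    using assms supp_sc[of c x] by (intro m_expand_superset Uvec_sc) (auto simp: Uvec_def)
  then show ?thesis
    using m_expand[OF assms] by (simp add: sc_sum sc_apply mult.assoc)
qed

lemma m_sc_right:
  assumes "x \<in> Uvec" "y \<in> Uvec"
  shows "m x (sc c y) = sc c (m x y)"
proof -
  have "m x (sc c y) = (\<Sum>a\<in>supp x. \<Sum>b\<in>supp y. sc (x a * sc c y b) (m (bas a) (bas b)))"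
    using assms supp_sc[of c y] by (intro m_expand_superset Uvec_sc) (auto simp: Uvec_def)
  then show ?thesis
    using m_expand[OF assms] by (simp add: sc_sum sc_apply mult.left_commute)
qed

lemma mt_tensor:
  assumes "x \<in> Uvec" "y \<in> Uvec" "x' \<in> Uvec" "y' \<in> Uvec"
  shows "mt m (tensor x y) (tensor x' y') = tensor (m x x') (m y y')"
proof (rule ext, clarify)
  fix s t
  let ?M = "\<lambda>a b. m (bas a) (bas b)"
  have "mt m (tensor x y) (tensor x' y') (s, t) =
     (\<Sum>a\<in>supp x. \<Sum>c\<in>supp y. \<Sum>b\<in>supp x'. \<Sum>d\<in>supp y'.
        x a * y c * (x' b * y' d) * (?M a b s * ?M c d t))"
    unfolding mt_def supp_tensor sum_fun_apply sum_product by (simp add: sc_apply)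
  also have "\<dots> = (\<Sum>a\<in>supp x. \<Sum>b\<in>supp x'. \<Sum>c\<in>supp y. \<Sum>d\<in>supp y'.
        x a * y c * (x' b * y' d) * (?M a b s * ?M c d t))"
    by (rule sum.cong[OF refl], rule sum.swap)
  also have "\<dots> = (\<Sum>a\<in>supp x. \<Sum>b\<in>supp x'. x a * x' b * ?M a b s)
      * (\<Sum>c\<in>supp y. \<Sum>d\<in>supp y'. y c * y' d * ?M c d t)"
    by (simp only: sum_distrib_right, simp only: sum_distrib_left, simp add: mult_ac)
  also have "\<dots> = m x x' s * m y y' t"
    unfolding m_expand[OF assms(1,3)] m_expand[OF assms(2,4)] sum_fun_apply sc_apply ..
  finally show "mt m (tensor x y) (tensor x' y') (s, t) = tensor (m x x') (m y y') (s, t)"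
    by simp
qed

abbreviation "Fgen \<equiv> Fel m \<kappa>"
abbreviation "Egen \<equiv> Eel m \<kappa>"
abbreviation "Fd \<equiv> Fdiv m q \<kappa>"
abbreviation "Ed \<equiv> Ediv m q \<kappa>"
abbreviation "Gd \<equiv> Gdiv m"
abbreviation "Fpower \<equiv> pow m uone Fgen"
abbreviation "Epower \<equiv> pow m uone Egen"
abbreviation "Kinv_power \<equiv> pow m uone (Kinv \<kappa>)"

lemma Kinv_power_eq: "Kinv_power n = fel (inverse \<kappa> ^ n)"
  by (induction n) (auto simp: pow_Suc Kinv_def fel_mult uone_def)

lemma Kel_in_Uvec [simp]: "Kel \<kappa> \<in> Uvec"
  and Kinv_in_Uvec [simp]: "Kinv \<kappa> \<in> Uvec"
  and Fgen_in_Uvec [simp]: "Fgen \<in> Uvec"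
  and Egen_in_Uvec [simp]: "Egen \<in> Uvec"
  by (simp_all add: Kel_def Kinv_def Fel_def Eel_def)

lemma pow_in_Uvec [simp]: "x \<in> Uvec \<Longrightarrow> pow m uone x n \<in> Uvec"
  by (induction n) (auto simp: pow_Suc)

lemma Fd_in_Uvec [simp]: "Fd n \<in> Uvec"
  and Ed_in_Uvec [simp]: "Ed n \<in> Uvec"
  and Gd_in_Uvec [simp]: "Gd n \<in> Uvec"
  by (simp_all add: Fdiv_def Ediv_def Gdiv_def Uvec_sc)

lemma divided_powers_0: "Fd 0 = uone" "Ed 0 = uone" "Gd 0 = uone"
  by (simp_all add: Fdiv_def Ediv_def Gdiv_def)

lemma bas_F_eq: "\<nu> \<noteq> 0 \<Longrightarrow> bas (a, \<nu>, 0, 0) = m (Fd a) (fel \<nu>)"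
  and bas_E_eq: "\<nu> \<noteq> 0 \<Longrightarrow> bas (0, \<nu>, b, 0) = m (fel \<nu>) (Ed b)"
  and bas_FE_eq: "\<nu> \<noteq> 0 \<Longrightarrow> bas (a, \<nu>, b, 0) = m (m (Fd a) (fel \<nu>)) (Ed b)"
  and bas_G_eq: "bas (0, 1, 0, c) = Gd c"
  by (simp_all add: bas_PBW divided_powers_0 flip: uone_def)

lemma bas_F_times_fel:
  "\<nu> \<noteq> 0 \<Longrightarrow> \<rho> \<noteq> 0 \<Longrightarrow> m (bas (a, \<nu>, 0, 0)) (fel \<rho>) = bas (a, \<nu> * \<rho>, 0, 0)"
  by (simp add: bas_F_eq m_assoc fel_mult)

lemma fel_times_bas_E:
  "\<nu> \<noteq> 0 \<Longrightarrow> \<rho> \<noteq> 0 \<Longrightarrow> m (fel \<rho>) (bas (0, \<nu>, b, 0)) = bas (0, \<rho> * \<nu>, b, 0)"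
  by (simp add: bas_E_eq fel_mult flip: m_assoc)

lemma bas_F_times_bas_E:
  assumes "\<nu> \<noteq> 0" "\<rho> \<noteq> 0"
  shows "m (bas (a, \<nu>, 0, 0)) (bas (0, \<rho>, b, 0)) = bas (a, \<nu> * \<rho>, b, 0)"
proof -
  have "m (bas (a, \<nu>, 0, 0)) (bas (0, \<rho>, b, 0)) = m (Fd a) (m (fel \<nu>) (bas (0, \<rho>, b, 0)))"
    using assms by (simp add: bas_F_eq m_assoc)
  also have "\<dots> = m (Fd a) (bas (0, \<nu> * \<rho>, b, 0))"
    using assms by (simp add: fel_times_bas_E)
  also have "\<dots> = bas (a, \<nu> * \<rho>, b, 0)"
    using assms by (simp add: bas_FE_eq bas_E_eq m_assoc divided_powers_0)
  finally show ?thesis .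
qed

lemma bas_FE_times_bas_G:
  "\<nu> \<noteq> 0 \<Longrightarrow> m (bas (a, \<nu>, b, 0)) (bas (0, 1, 0, c)) = bas (a, \<nu>, b, c)"
  by (simp add: bas_FE_eq bas_G_eq bas_PBW divided_powers_0)

lemma F_times_bas_F:
  assumes "\<nu> \<noteq> 0"
  shows "m Fgen (bas (a, \<nu>, 0, 0)) = sc (qint q (Suc a)) (bas (Suc a, \<kappa> * \<nu>, 0, 0))"
proof -
  have "m Fgen (Fd a) = sc (inverse (qfact q a)) (m (Fpower (Suc a)) (Kinv_power a))"
    by (simp add: Fdiv_def m_sc_right pow_Suc flip: m_assoc)
  also have "Kinv_power a = m (Kinv_power (Suc a)) (fel \<kappa>)"
    by (simp add: Kinv_power_eq fel_mult field_simps)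
  also have "m (Fpower (Suc a)) (m (Kinv_power (Suc a)) (fel \<kappa>))
      = sc (qfact q (Suc a)) (m (Fd (Suc a)) (fel \<kappa>))"
    by (simp add: Fdiv_def m_sc_left flip: m_assoc)
  finally have F_Fd: "m Fgen (Fd a) = sc (qint q (Suc a)) (m (Fd (Suc a)) (fel \<kappa>))"
    by (simp add: qfact_Suc field_simps)
  have "m Fgen (bas (a, \<nu>, 0, 0)) = m (m Fgen (Fd a)) (fel \<nu>)"
    using assms by (simp add: bas_F_eq m_assoc)
  also have "\<dots> = sc (qint q (Suc a)) (m (Fd (Suc a)) (m (fel \<kappa>) (fel \<nu>)))"
    using assms by (simp add: F_Fd m_sc_left m_assoc)
  also have "\<dots> = sc (qint q (Suc a)) (bas (Suc a, \<kappa> * \<nu>, 0, 0))"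
    using assms by (simp add: fel_mult bas_F_eq)
  finally show ?thesis .
qed

lemma fel_times_Fpower:
  assumes "\<rho> \<noteq> 0"
  shows "m (fel \<rho>) (Fpower n) = sc (inverse \<rho> ^ (2 * n)) (m (Fpower n) (fel \<rho>))"
proof (induction n)
  case 0
  then show ?case
    using assms by (simp add: uone_def fel_mult)
next
  case (Suc n)
  have "m (fel \<rho>) (Fpower (Suc n)) = m (m (fel \<rho>) Fgen) (Fpower n)"
    using assms by (simp add: pow_Suc m_assoc)
  also have "\<dots> = sc (inverse (\<rho>\<^sup>2)) (m Fgen (m (fel \<rho>) (Fpower n)))"
    using assms by (simp add: fel_F_commute m_sc_left m_assoc)
  also have "\<dots> = sc (inverse (\<rho>\<^sup>2) * inverse \<rho> ^ (2 * n)) (m (Fpower (Suc n)) (fel \<rho>))"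
    using assms by (simp add: Suc m_sc_right pow_Suc m_assoc)
  also have "inverse (\<rho>\<^sup>2) * inverse \<rho> ^ (2 * n) = inverse \<rho> ^ (2 * Suc n)"
    by (metis power_add power_inverse mult_Suc_right add_2_eq_Suc)
  finally show ?case .
qed

lemma fel_times_bas_F:
  assumes "\<rho> \<noteq> 0" "\<nu> \<noteq> 0"
  shows "m (fel \<rho>) (bas (a, \<nu>, 0, 0)) = sc (inverse \<rho> ^ (2 * a)) (bas (a, \<rho> * \<nu>, 0, 0))"
proof -
  have "m (fel \<rho>) (Kinv_power a) = m (Kinv_power a) (fel \<rho>)"
    using assms by (simp add: Kinv_power_eq fel_mult mult.commute)
  then have "m (fel \<rho>) (Fd a)
      = sc (inverse (qfact q a)) (m (m (fel \<rho>) (Fpower a)) (Kinv_power a))"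
    using assms by (simp add: Fdiv_def m_sc_right m_assoc)
  also have "\<dots> = sc (inverse \<rho> ^ (2 * a)) (m (Fd a) (fel \<rho>))"
    using assms \<open>m (fel \<rho>) (Kinv_power a) = _\<close>
    by (simp add: Fdiv_def fel_times_Fpower m_sc_left m_assoc mult.commute)
  finally have fel_Fd: "m (fel \<rho>) (Fd a) = sc (inverse \<rho> ^ (2 * a)) (m (Fd a) (fel \<rho>))" .
  have "m (fel \<rho>) (bas (a, \<nu>, 0, 0)) = m (m (fel \<rho>) (Fd a)) (fel \<nu>)"
    using assms by (simp add: bas_F_eq m_assoc)
  also have "\<dots> = sc (inverse \<rho> ^ (2 * a)) (m (Fd a) (m (fel \<rho>) (fel \<nu>)))"
    using assms by (simp add: fel_Fd m_sc_left m_assoc)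
  also have "\<dots> = sc (inverse \<rho> ^ (2 * a)) (bas (a, \<rho> * \<nu>, 0, 0))"
    using assms by (simp add: fel_mult bas_F_eq)
  finally show ?thesis .
qed

lemma E_times_bas_E:
  assumes "\<nu> \<noteq> 0"
  shows "m Egen (bas (0, \<nu>, b, 0))
       = sc (inverse (\<nu>\<^sup>2) * q ^ b * qint q (Suc b)) (bas (0, \<kappa> * \<nu>, Suc b, 0))"
proof -
  have "m (Kinv_power b) Egen = sc ((inverse \<kappa> ^ b)\<^sup>2) (m Egen (Kinv_power b))"
    by (simp add: Kinv_power_eq fel_E_commute)
  moreover have "q ^ b * (inverse \<kappa> ^ b)\<^sup>2 = 1"
    using kappa_square[symmetric] by (simp add: power_inverse field_simps flip: power_mult)
  ultimately have E_Kinv_power: "m Egen (Kinv_power b) = sc (q ^ b) (m (Kinv_power b) Egen)"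
    by simp
  have "m Egen (Ed b) = sc (inverse (qfact q b)) (m (m Egen (Kinv_power b)) (Epower b))"
    by (simp add: Ediv_def m_sc_right m_assoc)
  also have "\<dots> = sc (inverse (qfact q b) * q ^ b) (m (Kinv_power b) (Epower (Suc b)))"
    by (simp add: E_Kinv_power m_sc_left m_assoc pow_Suc)
  also have "Kinv_power b = m (fel \<kappa>) (Kinv_power (Suc b))"
    by (simp add: Kinv_power_eq fel_mult field_simps)
  also have "m (m (fel \<kappa>) (Kinv_power (Suc b))) (Epower (Suc b))
      = sc (qfact q (Suc b)) (m (fel \<kappa>) (Ed (Suc b)))"
    by (simp add: Ediv_def m_sc_right m_assoc)
  finally have E_Ed: "m Egen (Ed b) = sc (q ^ b * qint q (Suc b)) (m (fel \<kappa>) (Ed (Suc b)))"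
    by (simp add: qfact_Suc field_simps)
  have E_fel: "m Egen (fel \<nu>) = sc (inverse (\<nu>\<^sup>2)) (m (fel \<nu>) Egen)"
    using assms by (simp add: fel_E_commute)
  have "m Egen (bas (0, \<nu>, b, 0)) = m (m Egen (fel \<nu>)) (Ed b)"
    using assms by (simp add: bas_E_eq m_assoc)
  also have "\<dots> = sc (inverse (\<nu>\<^sup>2)) (m (fel \<nu>) (m Egen (Ed b)))"
    using assms by (simp add: E_fel m_sc_left m_assoc)
  also have "\<dots> = sc (inverse (\<nu>\<^sup>2) * (q ^ b * qint q (Suc b))) (m (fel \<nu>) (m (fel \<kappa>) (Ed (Suc b))))"
    using assms by (simp add: E_Ed m_sc_right)
  also have "\<dots> = sc (inverse (\<nu>\<^sup>2) * q ^ b * qint q (Suc b)) (bas (0, \<kappa> * \<nu>, Suc b, 0))"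
    using assms by (simp add: bas_E_eq fel_mult mult_ac flip: m_assoc)
  finally show ?thesis .
qed

lemma G_times_bas_G: "m Gel (bas (0, 1, 0, c)) = sc (of_nat (Suc c)) (bas (0, 1, 0, Suc c))"
proof -
  have "m Gel (Gd c) = sc (inverse (fact c)) (pow m uone Gel (Suc c))"
    by (simp add: Gdiv_def m_sc_right pow_Suc)
  also have "\<dots> = sc (of_nat (Suc c)) (Gd (Suc c))"
    by (simp add: Gdiv_def field_simps del: of_nat_Suc)
  finally show ?thesis
    by (simp only: bas_G_eq)
qed

section \<open>Coproducts of basis elements\<close>

lemma Delta_F_power:
  "pow (mt m) tone (tensor Fgen (Kel \<kappa>) + tensor (Kinv \<kappa>) Fgen) i
   = sc (qfact q i) (\<Sum>a\<le>i. tensor (bas (a, \<kappa> ^ a * inverse \<kappa> ^ (i - a), 0, 0)) (bas (i - a, \<kappa> ^ i, 0, 0)))"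
proof (rule mt_power_expansion[where c = "qfact q"
      and \<alpha> = "\<lambda>i a. qint q a * inverse q ^ (Suc i - a)" and \<beta> = "\<lambda>i a. q ^ a * qint q (Suc i - a)"])
  show "finite (supp (tensor Fgen (Kel \<kappa>) + tensor (Kinv \<kappa>) Fgen))"
    by (simp add: finite_supp_add finite_supp_tensor)
next
  fix i a :: nat
  assume "a \<le> i"
  then show "mt m (tensor Fgen (Kel \<kappa>) + tensor (Kinv \<kappa>) Fgen)
      (tensor (bas (a, \<kappa> ^ a * inverse \<kappa> ^ (i - a), 0, 0)) (bas (i - a, \<kappa> ^ i, 0, 0)))
    = sc (qint q (Suc a) * inverse q ^ (Suc i - Suc a))
        (tensor (bas (Suc a, \<kappa> ^ Suc a * inverse \<kappa> ^ (Suc i - Suc a), 0, 0)) (bas (Suc i - Suc a, \<kappa> ^ Suc i, 0, 0)))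
      + sc (q ^ a * qint q (Suc i - a))
        (tensor (bas (a, \<kappa> ^ a * inverse \<kappa> ^ (Suc i - a), 0, 0)) (bas (Suc i - a, \<kappa> ^ Suc i, 0, 0)))"
    by (simp add: mt_add_left mt_tensor finite_supp_tensor F_times_bas_F fel_times_bas_F
        Kel_def Kinv_def tensor_sc_left tensor_sc_right Suc_diff_le
        kappa_power_double inverse_kappa_power_double)
      (simp add: mult_ac)
next
  fix i a :: nat
  assume "a \<le> Suc i"
  then show "qfact q i * (qint q a * inverse q ^ (Suc i - a) + q ^ a * qint q (Suc i - a)) = qfact q (Suc i)"
    using qint_add[of q a "Suc i - a"] by (simp add: qfact_Suc)
qed (simp_all add: finite_supp_tensor finite_supp_add tone_def uone_eq_bas)

lemma Delta_E_power:
  "pow (mt m) tone (tensor Egen (Kel \<kappa>) + tensor (Kinv \<kappa>) Egen) j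
   = sc (qfact q j) (\<Sum>b\<le>j. tensor (bas (0, \<kappa> ^ b * inverse \<kappa> ^ (j - b), b, 0)) (bas (0, \<kappa> ^ j, j - b, 0)))"
proof (rule mt_power_expansion[where c = "qfact q"
      and \<alpha> = "\<lambda>j b. qint q b * q ^ (Suc j - b)" and \<beta> = "\<lambda>j b. inverse q ^ b * qint q (Suc j - b)"])
  show "finite (supp (tensor Egen (Kel \<kappa>) + tensor (Kinv \<kappa>) Egen))"
    by (simp add: finite_supp_add finite_supp_tensor)
next
  fix j b :: nat
  assume "b \<le> j"
  then obtain n where j: "j = b + n"
    using le_Suc_ex by blast
  have "(\<kappa> ^ b * inverse \<kappa> ^ (j - b))\<^sup>2 = q ^ b * inverse q ^ (j - b)"
    using kappa_power_double[of b] inverse_kappa_power_double[of "j - b"]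
    by (simp add: power_mult_distrib mult.commute flip: power_mult)
  then have left_label: "inverse ((\<kappa> ^ b * inverse \<kappa> ^ (j - b))\<^sup>2) * q ^ b = q ^ (j - b)"
    using q_nonzero by (simp add: field_simps power_inverse)
  have "(\<kappa> ^ j)\<^sup>2 = q ^ j"
    using kappa_power_double[of j] by (simp add: power_mult mult.commute)
  then have right_label: "inverse ((\<kappa> ^ j)\<^sup>2) * q ^ (j - b) = inverse q ^ b"
    using q_nonzero j by (simp add: field_simps power_inverse power_add)
  show "mt m (tensor Egen (Kel \<kappa>) + tensor (Kinv \<kappa>) Egen)
      (tensor (bas (0, \<kappa> ^ b * inverse \<kappa> ^ (j - b), b, 0)) (bas (0, \<kappa> ^ j, j - b, 0)))
    = sc (qint q (Suc b) * q ^ (Suc j - Suc b))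
        (tensor (bas (0, \<kappa> ^ Suc b * inverse \<kappa> ^ (Suc j - Suc b), Suc b, 0)) (bas (0, \<kappa> ^ Suc j, Suc j - Suc b, 0)))
      + sc (inverse q ^ b * qint q (Suc j - b))
        (tensor (bas (0, \<kappa> ^ b * inverse \<kappa> ^ (Suc j - b), b, 0)) (bas (0, \<kappa> ^ Suc j, Suc j - b, 0)))"
    using \<open>b \<le> j\<close>
    by (simp add: mt_add_left mt_tensor finite_supp_tensor E_times_bas_E fel_times_bas_E
        Kel_def Kinv_def tensor_sc_left tensor_sc_right Suc_diff_le left_label right_label)
      (simp add: mult_ac)
next
  fix j b :: nat
  assume "b \<le> Suc j"
  then show "qfact q j * (qint q b * q ^ (Suc j - b) + inverse q ^ b * qint q (Suc j - b)) = qfact q (Suc j)"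
    using qint_add[of q "Suc j - b" b] by (simp add: qfact_Suc algebra_simps)
qed (simp_all add: finite_supp_tensor tone_def uone_eq_bas)

lemma Delta_G_power:
  "pow (mt m) tone (tensor uone Gel + tensor Gel uone) k
   = sc (fact k) (\<Sum>c\<le>k. tensor (bas (0, 1, 0, c)) (bas (0, 1, 0, k - c)))"
proof (rule mt_power_expansion[where c = fact
      and \<alpha> = "\<lambda>k c. of_nat c" and \<beta> = "\<lambda>k c. of_nat (Suc k - c)"])
  show "finite (supp (tensor uone Gel + tensor Gel uone))"
    by (simp add: finite_supp_add finite_supp_tensor)
next
  fix k c :: nat
  assume "c \<le> k"
  then show "mt m (tensor uone Gel + tensor Gel uone) (tensor (bas (0, 1, 0, c)) (bas (0, 1, 0, k - c)))
    = sc (of_nat (Suc c)) (tensor (bas (0, 1, 0, Suc c)) (bas (0, 1, 0, Suc k - Suc c)))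
      + sc (of_nat (Suc k - c)) (tensor (bas (0, 1, 0, c)) (bas (0, 1, 0, Suc k - c)))"
    by (simp add: mt_add_left mt_tensor finite_supp_tensor G_times_bas_G tensor_sc_left
        tensor_sc_right Suc_diff_le add.commute del: of_nat_Suc)
next
  fix k c :: nat
  assume "c \<le> Suc k"
  then show "fact k * (of_nat c + of_nat (Suc k - c)) = (fact (Suc k) :: complex)"
    by (simp add: mult.commute flip: of_nat_add)
qed (simp_all add: finite_supp_tensor tone_def uone_eq_bas)

lemma Delta_Kinv_power:
  "pow (mt m) tone (tensor (Kinv \<kappa>) (Kinv \<kappa>)) n = tensor (fel (inverse \<kappa> ^ n)) (fel (inverse \<kappa> ^ n))"
  by (induction n) (simp_all add: pow_Suc mt_tensor Kinv_def fel_mult tone_def uone_def)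

lemma kappa_power_inverse_cancel [simp]:
  "\<kappa> ^ n * inverse \<kappa> ^ n = 1" "inverse \<kappa> ^ n * \<kappa> ^ n = 1"
  by (simp_all add: field_simps)

lemma Fdiv_coproduct_label: "a \<le> i \<Longrightarrow> \<kappa> ^ a * inverse \<kappa> ^ (i - a) * inverse \<kappa> ^ i = inverse q ^ (i - a)"
proof -
  assume "a \<le> i"
  then obtain n where i: "i = a + n"
    using le_Suc_ex by blast
  have "\<kappa> ^ a * inverse \<kappa> ^ n * inverse \<kappa> ^ (a + n) = inverse \<kappa> ^ (n + n)"
    by (simp add: power_add field_simps power_inverse)
  then show ?thesis
    by (simp add: i flip: mult_2 inverse_kappa_power_double)
qed

lemma Ediv_coproduct_label: "b \<le> j \<Longrightarrow> inverse \<kappa> ^ j * (\<kappa> ^ b * inverse \<kappa> ^ (j - b)) = inverse q ^ (j - b)"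
  using Fdiv_coproduct_label by (simp add: mult.commute)

lemma Delta_Fdiv:
  "sc (inverse (qfact q i)) (mt m (pow (mt m) tone (tensor Fgen (Kel \<kappa>) + tensor (Kinv \<kappa>) Fgen) i)
      (pow (mt m) tone (tensor (Kinv \<kappa>) (Kinv \<kappa>)) i))
   = (\<Sum>a\<le>i. tensor (bas (a, inverse q ^ (i - a), 0, 0)) (bas (i - a, 1, 0, 0)))"
proof -
  have "sc (inverse (qfact q i)) (mt m (pow (mt m) tone (tensor Fgen (Kel \<kappa>) + tensor (Kinv \<kappa>) Fgen) i)
      (pow (mt m) tone (tensor (Kinv \<kappa>) (Kinv \<kappa>)) i))
    = (\<Sum>a\<le>i. mt m (tensor (bas (a, \<kappa> ^ a * inverse \<kappa> ^ (i - a), 0, 0)) (bas (i - a, \<kappa> ^ i, 0, 0)))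
         (tensor (fel (inverse \<kappa> ^ i)) (fel (inverse \<kappa> ^ i))))"
    by (simp add: Delta_F_power Delta_Kinv_power mt_sc_left mt_sum_left finite_supp_sum finite_supp_tensor)
  also have "\<dots> = (\<Sum>a\<le>i. tensor (bas (a, inverse q ^ (i - a), 0, 0)) (bas (i - a, 1, 0, 0)))"
    by (intro sum.cong refl) (simp add: mt_tensor bas_F_times_fel Fdiv_coproduct_label)
  finally show ?thesis .
qed

lemma Delta_Ediv:
  "sc (inverse (qfact q j)) (mt m (pow (mt m) tone (tensor (Kinv \<kappa>) (Kinv \<kappa>)) j)
      (pow (mt m) tone (tensor Egen (Kel \<kappa>) + tensor (Kinv \<kappa>) Egen) j))
   = (\<Sum>b\<le>j. tensor (bas (0, inverse q ^ (j - b), b, 0)) (bas (0, 1, j - b, 0)))"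
proof -
  have "sc (inverse (qfact q j)) (mt m (pow (mt m) tone (tensor (Kinv \<kappa>) (Kinv \<kappa>)) j)
      (pow (mt m) tone (tensor Egen (Kel \<kappa>) + tensor (Kinv \<kappa>) Egen) j))
    = (\<Sum>b\<le>j. mt m (tensor (fel (inverse \<kappa> ^ j)) (fel (inverse \<kappa> ^ j)))
         (tensor (bas (0, \<kappa> ^ b * inverse \<kappa> ^ (j - b), b, 0)) (bas (0, \<kappa> ^ j, j - b, 0))))"
    by (simp add: Delta_E_power Delta_Kinv_power mt_sc_right mt_sum_right finite_supp_sum finite_supp_tensor)
  also have "\<dots> = (\<Sum>b\<le>j. tensor (bas (0, inverse q ^ (j - b), b, 0)) (bas (0, 1, j - b, 0)))"
    by (intro sum.cong refl) (simp add: mt_tensor fel_times_bas_E Ediv_coproduct_label)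
  finally show ?thesis .
qed

lemma Delta_Gdiv:
  "sc (inverse (fact k)) (pow (mt m) tone (tensor uone Gel + tensor Gel uone) k)
   = (\<Sum>c\<le>k. tensor (bas (0, 1, 0, c)) (bas (0, 1, 0, k - c)))"
  by (simp add: Delta_G_power)

lemma Delta_bas_eq:
  assumes "\<mu> \<noteq> 0"
  shows "Delta_bas m q \<kappa> (i, \<mu>, j, k) = (\<Sum>a\<le>i. \<Sum>b\<le>j. \<Sum>c\<le>k.
      tensor (bas (a, inverse q ^ (i - a) * \<mu> * inverse q ^ (j - b), b, c)) (bas (i - a, \<mu>, j - b, k - c)))"
  using assms q_nonzero
  by (simp add: Delta_bas_def Let_def Delta_Fdiv Delta_Ediv Delta_Gdiv mt_sum_left mt_sum_right
      finite_supp_sum finite_supp_tensor mt_tensor bas_F_times_fel bas_F_times_bas_E bas_FE_times_bas_G)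
    (subst sum.swap, subst (2) sum.swap, subst sum.swap, rule refl)

lemma Delta_bas_apply:
  assumes "\<mu> \<noteq> 0"
  shows "Delta_bas m q \<kappa> (i, \<mu>, j, k) (p, (i', \<mu>, j', k'))
       = (if i' \<le> i \<and> j' \<le> j \<and> k' \<le> k
          then bas (i - i', \<mu> * inverse q ^ (i' + j'), j - j', k - k') p else 0)"
proof -
  let ?S = "{..i} \<times> {..j} \<times> {..k}"
  let ?g = "\<lambda>a b c. bas (a, inverse q ^ (i - a) * \<mu> * inverse q ^ (j - b), b, c) p
      * bas (i - a, \<mu>, j - b, k - c) (i', \<mu>, j', k')"
  let ?f = "\<lambda>(a, b, c). ?g a b c"
  have "Delta_bas m q \<kappa> (i, \<mu>, j, k) (p, (i', \<mu>, j', k')) = (\<Sum>a\<le>i. \<Sum>b\<le>j. \<Sum>c\<le>k. ?g a b c)"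
    using assms by (simp add: Delta_bas_eq sum_fun_apply)
  also have "\<dots> = sum ?f ?S"
    by (simp add: sum.cartesian_product)
  also have "\<dots> = (if (i - i', j - j', k - k') \<in> ?S then ?f (i - i', j - j', k - k') else 0)"
    by (rule sum_eq_single) (auto simp: bas_def split: if_splits)
  also have "\<dots> = (if i' \<le> i \<and> j' \<le> j \<and> k' \<le> k
          then bas (i - i', \<mu> * inverse q ^ (i' + j'), j - j', k - k') p else 0)"
    by (auto simp: bas_def power_add mult_ac)
  finally show ?thesis .
qed

lemma Delta_slice:
  assumes "\<mu> \<noteq> 0" and "X \<in> Umu \<mu>"
  shows "(\<lambda>p. Delta m q \<kappa> X (p, (i', \<mu>, j', k'))) = lowered X \<mu> (\<mu> * inverse q ^ (i' + j')) i' j' k'"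
proof (rule ext, clarify)
  fix a \<nu> b e
  let ?c = "(a + i', \<mu>, b + j', e + k')" and ?\<eta> = "\<mu> * inverse q ^ (i' + j')"
  have fin: "finite (supp X)" and label: "\<And>c. c \<in> supp X \<Longrightarrow> fst (snd c) = \<mu>"
    using assms(2) by (auto simp: Umu_def Uvec_def)
  have "Delta m q \<kappa> X ((a, \<nu>, b, e), (i', \<mu>, j', k'))
      = (\<Sum>c\<in>supp X. X c * Delta_bas m q \<kappa> c ((a, \<nu>, b, e), (i', \<mu>, j', k')))"
    by (simp add: Delta_def sum_fun_apply sc_apply)
  also have "\<dots> = (\<Sum>c\<in>supp X. if c = ?c then (if \<nu> = ?\<eta> then X c else 0) else 0)"
  proof (rule sum.cong[OF refl])
    fix c
    assume "c \<in> supp X"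
    then obtain i j k where "c = (i, \<mu>, j, k)"
      using label by (cases c) auto
    then show "X c * Delta_bas m q \<kappa> c ((a, \<nu>, b, e), (i', \<mu>, j', k'))
        = (if c = ?c then (if \<nu> = ?\<eta> then X c else 0) else 0)"
      using assms(1) by (auto simp: Delta_bas_apply bas_def)
  qed
  also have "\<dots> = lowered X \<mu> ?\<eta> i' j' k' (a, \<nu>, b, e)"
    using fin by (simp add: supp_def lowered_def)
  finally show "Delta m q \<kappa> X ((a, \<nu>, b, e), (i', \<mu>, j', k')) = lowered X \<mu> ?\<eta> i' j' k' (a, \<nu>, b, e)" .
qed

end

section \<open>Right coideals and triangular families\<close>

lemma subspace_U_sum: "subspace_U S \<Longrightarrow> (\<And>a. a \<in> A \<Longrightarrow> f a \<in> S) \<Longrightarrow> (\<Sum>a\<in>A. f a) \<in> S"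
  by (induction A rule: infinite_finite_induct) (auto simp: subspace_U_def)

lemma right_coideal_slice:
  assumes "right_coideal m q \<kappa> S" and "X \<in> S"
  shows "(\<lambda>p. Delta m q \<kappa> X (p, r)) \<in> S"
proof -
  have subspace: "subspace_U S"
    using assms(1) by (simp add: right_coideal_def)
  have "Delta m q \<kappa> X \<in> lin {tensor y u | y u. y \<in> S \<and> u \<in> Uvec}"
    using assms by (simp add: right_coideal_def)
  then obtain A c where A: "finite A" "A \<subseteq> {tensor y u | y u. y \<in> S \<and> u \<in> Uvec}"
    and Delta_X: "Delta m q \<kappa> X = (\<Sum>a\<in>A. sc (c a) a)"
    unfolding lin_def by blast
  obtain y u where yu: "\<And>a. a \<in> A \<Longrightarrow> a = tensor (y a) (u a) \<and> y a \<in> S"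
    using A(2) by (simp add: subset_eq) metis
  have "(\<lambda>p. Delta m q \<kappa> X (p, r)) = (\<Sum>a\<in>A. sc (c a * u a r) (y a))"
  proof
    fix p
    have "Delta m q \<kappa> X (p, r) = (\<Sum>a\<in>A. c a * a (p, r))"
      by (simp add: Delta_X sum_fun_apply sc_apply)
    also have "\<dots> = (\<Sum>a\<in>A. c a * u a r * y a p)"
      using yu by (intro sum.cong refl) (metis mult.commute mult.left_commute tensor_apply)
    finally show "Delta m q \<kappa> X (p, r) = (\<Sum>a\<in>A. sc (c a * u a r) (y a)) p"
      by (simp add: sum_fun_apply sc_apply)
  qed
  also have "\<dots> \<in> S"
    using subspace yu by (intro subspace_U_sum) (auto simp: subspace_U_def)
  finally show ?thesis .
qed

lemma triangular_inj_on:
  fixes v :: "'i \<Rightarrow> 'a \<Rightarrow> complex" and key :: "'i \<Rightarrow> nat"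
  assumes nonzero: "\<And>x. x \<in> I \<Longrightarrow> v x (p x) \<noteq> 0"
    and triangular: "\<And>x y. x \<in> I \<Longrightarrow> y \<in> I \<Longrightarrow> x \<noteq> y \<Longrightarrow> key x \<le> key y \<Longrightarrow> v y (p x) = 0"
  shows "inj_on v I"
proof (rule inj_onI, rule ccontr)
  fix x y
  assume "x \<in> I" "y \<in> I" "v x = v y" "x \<noteq> y"
  then show False
    using nonzero triangular nat_le_linear[of "key x" "key y"] by metis
qed

lemma triangular_lin_indep:
  fixes v :: "'i \<Rightarrow> 'a \<Rightarrow> complex" and key :: "'i \<Rightarrow> nat"
  assumes "finite I"
    and nonzero: "\<And>x. x \<in> I \<Longrightarrow> v x (p x) \<noteq> 0"
    and triangular: "\<And>x y. x \<in> I \<Longrightarrow> y \<in> I \<Longrightarrow> x \<noteq> y \<Longrightarrow> key x \<le> key y \<Longrightarrow> v y (p x) = 0"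
  shows "lin_indep (v ` I)"
  unfolding lin_indep_def
proof (intro conjI allI impI ballI)
  show "finite (v ` I)"
    using \<open>finite I\<close> by simp
  fix c :: "('a \<Rightarrow> complex) \<Rightarrow> complex" and b
  assume combination: "(\<Sum>b\<in>v ` I. sc (c b) b) = 0" and "b \<in> v ` I"
  show "c b = 0"
  proof (rule ccontr)
    assume "c b \<noteq> 0"
    then obtain x where x: "x \<in> I" "c (v x) \<noteq> 0"
      and least: "\<And>y. y \<in> I \<Longrightarrow> c (v y) \<noteq> 0 \<Longrightarrow> key x \<le> key y"
      using \<open>b \<in> v ` I\<close> ex_has_least_nat[where P = "\<lambda>y. y \<in> I \<and> c (v y) \<noteq> 0" and m = key]
      by blast
    have "inj_on v I"
      using nonzero triangular by (rule triangular_inj_on)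
    then have "(\<Sum>y\<in>I. sc (c (v y)) (v y)) = 0"
      using combination by (simp add: sum.reindex)
    then have "0 = (\<Sum>y\<in>I. sc (c (v y)) (v y)) (p x)"
      by simp
    also have "\<dots> = (\<Sum>y\<in>I. c (v y) * v y (p x))"
      by (simp add: sum_fun_apply sc_apply)
    also have "\<dots> = c (v x) * v x (p x)"
      using \<open>finite I\<close> x least triangular by (subst sum_eq_single[where z = x]) auto
    finally show False
      using x nonzero by simp
  qed
qed

lemma dim_ge_triangular:
  fixes v :: "'i \<Rightarrow> U" and key :: "'i \<Rightarrow> nat"
  assumes "finite I" and "v ` I \<subseteq> S"
    and nonzero: "\<And>x. x \<in> I \<Longrightarrow> v x (p x) \<noteq> 0"
    and triangular: "\<And>x y. x \<in> I \<Longrightarrow> y \<in> I \<Longrightarrow> x \<noteq> y \<Longrightarrow> key x \<le> key y \<Longrightarrow> v y (p x) = 0"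
  shows "dim_ge S (card I)"
proof -
  have "card (v ` I) = card I"
    using nonzero triangular by (intro card_image triangular_inj_on)
  moreover have "lin_indep (v ` I)"
    using \<open>finite I\<close> nonzero triangular by (rule triangular_lin_indep)
  ultimately show ?thesis
    unfolding dim_ge_def using \<open>v ` I \<subseteq> S\<close> by metis
qed

section \<open>Degrees of an element of U\<close>

lemma Xcoef_apply: "Xcoef X k (i, \<nu>, j, 0) = X (i, \<nu>, j, k)"
  by (simp add: Xcoef_def)

lemma Xcoef_eq_0_iff: "Xcoef X k = 0 \<longleftrightarrow> (\<forall>i \<nu> j. X (i, \<nu>, j, k) = 0)"
proof
  assume "Xcoef X k = 0"
  then have "Xcoef X k (i, \<nu>, j, 0) = 0" for i \<nu> j
    by simp
  then show "\<forall>i \<nu> j. X (i, \<nu>, j, k) = 0"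
    by (simp add: Xcoef_apply)
qed (auto simp: Xcoef_def fun_eq_iff)

lemma supp_Xcoef: "supp (Xcoef X k) \<subseteq> (\<lambda>(i, \<nu>, j, _). (i, \<nu>, j, 0)) ` supp X"
  by (force simp: supp_def Xcoef_def split: if_splits)

lemma finite_supp_Xcoef: "finite (supp X) \<Longrightarrow> finite (supp (Xcoef X k))"
  using supp_Xcoef by (rule finite_subset) simp

lemma d13_Xcoef_ge:
  assumes "finite (supp X)" and "X (i, \<nu>, j, k) \<noteq> 0"
  shows "i + j \<le> d13 (Xcoef X k)"
proof -
  have "(i, \<nu>, j, 0) \<in> supp (Xcoef X k)"
    using assms(2) by (simp add: supp_def Xcoef_apply)
  then show ?thesis
    unfolding d13_def using finite_supp_Xcoef[OF assms(1)] by (force intro: Max_ge)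
qed

lemma d13_Xcoef_attained:
  assumes "finite (supp X)" and "Xcoef X k \<noteq> 0"
  shows "\<exists>i \<nu> j. X (i, \<nu>, j, k) \<noteq> 0 \<and> i + j = d13 (Xcoef X k)"
proof -
  have "supp (Xcoef X k) \<noteq> {}"
    using assms(2) by (auto simp: supp_def fun_eq_iff)
  then have "d13 (Xcoef X k) \<in> (\<lambda>b. fst b + fst (snd (snd b))) ` supp (Xcoef X k)"
    unfolding d13_def using finite_supp_Xcoef[OF assms(1)] by (intro Max_in) auto
  then show ?thesis
    by (force simp: supp_def Xcoef_def split: if_splits)
qed

lemma d4_ge: "finite (supp X) \<Longrightarrow> X (i, \<nu>, j, k) \<noteq> 0 \<Longrightarrow> k \<le> d4 X"
  unfolding d4_def by (rule Max_ge) (auto simp: supp_def intro!: image_eqI[where x = "(i, \<nu>, j, k)"])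

lemma Xcoef_d4_nonzero:
  assumes "finite (supp X)" and "X \<noteq> 0"
  shows "Xcoef X (d4 X) \<noteq> 0"
proof -
  have "supp X \<noteq> {}"
    using assms(2) by (auto simp: supp_def fun_eq_iff)
  then have "d4 X \<in> (\<lambda>b. snd (snd (snd b))) ` supp X"
    unfolding d4_def using assms(1) by (intro Max_in) auto
  then show ?thesis
    by (force simp: supp_def Xcoef_eq_0_iff)
qed

lemma Xcoef_nonzero_le_d4: "finite (supp X) \<Longrightarrow> Xcoef X k \<noteq> 0 \<Longrightarrow> k \<le> d4 X"
  using d4_ge by (auto simp: Xcoef_eq_0_iff)

lemma finite_s13_set: "finite (supp X) \<Longrightarrow> finite {d13 (Xcoef X k) | k. k \<ge> t \<and> Xcoef X k \<noteq> 0}"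
  by (rule finite_subset[where B = "(\<lambda>k. d13 (Xcoef X k)) ` {..d4 X}"])
    (auto dest: Xcoef_nonzero_le_d4)

lemma s13_ge: "finite (supp X) \<Longrightarrow> t \<le> k \<Longrightarrow> Xcoef X k \<noteq> 0 \<Longrightarrow> d13 (Xcoef X k) \<le> s13 X t"
  unfolding s13_def by (rule Max_ge) (auto simp: finite_s13_set)

lemma s13_attained:
  assumes "finite (supp X)" and "X \<noteq> 0" and "t \<le> d4 X"
  shows "\<exists>k\<ge>t. Xcoef X k \<noteq> 0 \<and> d13 (Xcoef X k) = s13 X t"
proof -
  have "s13 X t \<in> {d13 (Xcoef X k) | k. k \<ge> t \<and> Xcoef X k \<noteq> 0}"
    unfolding s13_def using assms Xcoef_d4_nonzero by (intro Max_in finite_s13_set) auto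
  then show ?thesis
    by auto
qed

text \<open>Taking the largest G-degree at which s13 X t is attained is what makes the
  slices in the final proof triangular (lemma s13_above_last).\<close>

definition s13_last :: "U \<Rightarrow> nat \<Rightarrow> nat" where
  "s13_last X t = Max {k. t \<le> k \<and> Xcoef X k \<noteq> 0 \<and> d13 (Xcoef X k) = s13 X t}"

lemma finite_s13_last_set: "finite (supp X) \<Longrightarrow> finite {k. t \<le> k \<and> Xcoef X k \<noteq> 0 \<and> d13 (Xcoef X k) = s13 X t}"
  by (rule finite_subset[where B = "{..d4 X}"]) (auto dest: Xcoef_nonzero_le_d4)

lemma s13_last:
  assumes "finite (supp X)" and "X \<noteq> 0" and "t \<le> d4 X"
  shows "t \<le> s13_last X t \<and> Xcoef X (s13_last X t) \<noteq> 0 \<and> d13 (Xcoef X (s13_last X t)) = s13 X t"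
proof -
  have "s13_last X t \<in> {k. t \<le> k \<and> Xcoef X k \<noteq> 0 \<and> d13 (Xcoef X k) = s13 X t}"
    unfolding s13_last_def using s13_attained[OF assms] finite_s13_last_set[OF assms(1)]
    by (intro Max_in) auto
  then show ?thesis
    by simp
qed

lemma s13_leading_terms:
  assumes "X \<in> Umu \<mu>" and "X \<noteq> 0"
  obtains i0 j0 where
    "\<And>t. t \<le> d4 X \<Longrightarrow> X (i0 t, \<mu>, j0 t, s13_last X t) \<noteq> 0 \<and> i0 t + j0 t = s13 X t"
proof -
  have fin: "finite (supp X)"
    using assms(1) by (simp add: Umu_def Uvec_def)
  have label: "\<nu> = \<mu>" if "X (i, \<nu>, j, k) \<noteq> 0" for i \<nu> j k
    using assms(1) that by (force simp: Umu_def supp_def)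
  have "\<exists>i j. X (i, \<mu>, j, s13_last X t) \<noteq> 0 \<and> i + j = s13 X t" if t: "t \<le> d4 X" for t
  proof -
    obtain i \<nu> j where "X (i, \<nu>, j, s13_last X t) \<noteq> 0" and "i + j = s13 X t"
      using s13_last[OF fin assms(2) t] d13_Xcoef_attained[OF fin] by metis
    with label show ?thesis
      by metis
  qed
  then have "\<forall>t. \<exists>i j. t \<le> d4 X \<longrightarrow> X (i, \<mu>, j, s13_last X t) \<noteq> 0 \<and> i + j = s13 X t"
    by blast
  then obtain i0 where "\<forall>t. \<exists>j. t \<le> d4 X \<longrightarrow> X (i0 t, \<mu>, j, s13_last X t) \<noteq> 0 \<and> i0 t + j = s13 X t"
    by (rule choice[THEN exE])
  then obtain j0 where "\<forall>t. t \<le> d4 X \<longrightarrow> X (i0 t, \<mu>, j0 t, s13_last X t) \<noteq> 0 \<and> i0 t + j0 t = s13 X t"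
    by (rule choice[THEN exE])
  then show ?thesis
    using that by blast
qed

lemma s13_above_last:
  assumes "finite (supp X)" and "t \<le> k" and "s13_last X t < k" and "X (i, \<nu>, j, k) \<noteq> 0"
  shows "i + j < s13 X t"
proof -
  have "Xcoef X k \<noteq> 0"
    using assms(4) by (auto simp: Xcoef_eq_0_iff)
  then have "i + j \<le> d13 (Xcoef X k)" "d13 (Xcoef X k) \<le> s13 X t"
    using assms d13_Xcoef_ge s13_ge by blast+
  moreover have "d13 (Xcoef X k) \<noteq> s13 X t"
  proof
    assume "d13 (Xcoef X k) = s13 X t"
    then have "k \<le> s13_last X t"
      unfolding s13_last_def using assms(2) \<open>Xcoef X k \<noteq> 0\<close> finite_s13_last_set[OF assms(1)]
      by (intro Max_ge) auto
    with assms(3) show False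
      by simp
  qed
  ultimately show ?thesis
    by simp
qed

lemma s13_pivot_shift:
  assumes "finite (supp X)" and "X \<noteq> 0" and "t \<le> d4 X" and "t < t'" and "i + j = s13 X t"
  shows "X (i, \<nu>, j, s13_last X t - t + t') = 0"
proof -
  have "t \<le> s13_last X t"
    using s13_last[OF assms(1-3)] by simp
  then show ?thesis
    using s13_above_last[OF assms(1), of t "s13_last X t - t + t'" i \<nu> j] assms(4,5) by linarith
qed

lemma dim_ge_lowered:
  fixes lbl :: "nat \<Rightarrow> complex"
  assumes "inj lbl" and "X \<in> Umu \<mu>" and "X \<noteq> 0"
    and lowered_in: "\<And>i' j' k'. lowered X \<mu> (lbl (i' + j')) i' j' k' \<in> S"
  shows "dim_ge S (\<Sum>t=0..d4 X. s13 X t + 1)"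
proof -
  have fin: "finite (supp X)"
    using \<open>X \<in> Umu \<mu>\<close> by (simp add: Umu_def Uvec_def)
  obtain i0 j0 where lead:
    "\<And>t. t \<le> d4 X \<Longrightarrow> X (i0 t, \<mu>, j0 t, s13_last X t) \<noteq> 0 \<and> i0 t + j0 t = s13 X t"
    using s13_leading_terms[OF \<open>X \<in> Umu \<mu>\<close> \<open>X \<noteq> 0\<close>] by blast
  define I where "I = (SIGMA t:{0..d4 X}. {0..s13 X t})"
  define wF where "wF t w = min w (i0 t)" for t w
  \<comment> \<open>v (t, w) is X moved down by t in G-degree and by w in F,E-degree; pivot (t, w)
    is where the leading monomial chosen by lead lands in it.\<close>
  define v where "v = (\<lambda>(t, w). lowered X \<mu> (lbl w) (wF t w) (w - wF t w) t)"
  define pivot where "pivot = (\<lambda>(t, w). (i0 t - wF t w, lbl w, j0 t - (w - wF t w), s13_last X t - t))"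
  have wF_le: "wF t w \<le> w" "wF t w \<le> i0 t" "w - wF t w \<le> j0 t" if "(t, w) \<in> I" for t w
    using that lead[of t] by (auto simp: I_def wF_def)
  have v_pivot: "v (t', w') (pivot (t, w)) = (if w = w'
      then X (i0 t - wF t w + wF t' w', \<mu>, j0 t - (w - wF t w) + (w' - wF t' w'), s13_last X t - t + t')
      else 0)" for t w t' w'
    using \<open>inj lbl\<close> by (simp add: v_def pivot_def lowered_def inj_eq)
  have "dim_ge S (card I)"
  proof (rule dim_ge_triangular[where key = fst and p = pivot])
    show "finite I"
      by (simp add: I_def)
    have "wF t w + (w - wF t w) = w" for t w
      by (simp add: wF_def)
    then show "v ` I \<subseteq> S"
      using lowered_in[of "wF t w" "w - wF t w" t for t w] by (auto simp: v_def)
  next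
    fix x
    assume "x \<in> I"
    then obtain t w where x: "x = (t, w)" "t \<le> d4 X"
      by (auto simp: I_def)
    show "v x (pivot x) \<noteq> 0"
      using lead[OF x(2)] wF_le[of t w] s13_last[OF fin \<open>X \<noteq> 0\<close> x(2)] \<open>x \<in> I\<close>
      by (simp add: x v_pivot)
  next
    fix x y
    assume "x \<in> I" "y \<in> I" "x \<noteq> y" "fst x \<le> fst y"
    obtain t w where x: "x = (t, w)" "t \<le> d4 X"
      using \<open>x \<in> I\<close> by (auto simp: I_def)
    obtain t' w' where y: "y = (t', w')"
      by fastforce
    show "v y (pivot x) = 0"
    proof (cases "w = w'")
      case True
      with \<open>x \<noteq> y\<close> \<open>fst x \<le> fst y\<close> have "t < t'"
        by (simp add: x y)
      let ?i = "i0 t - wF t w + wF t' w" and ?j = "j0 t - (w - wF t w) + (w - wF t' w)"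
      have "i0 t + j0 t = s13 X t" and "wF t' w \<le> w"
        using lead[OF x(2)] by (simp_all add: wF_def)
      then have "?i + ?j = s13 X t"
        using wF_le[of t w] \<open>x \<in> I\<close> unfolding x by arith
      then have "X (?i, \<mu>, ?j, s13_last X t - t + t') = 0"
        using s13_pivot_shift[OF fin \<open>X \<noteq> 0\<close> x(2) \<open>t < t'\<close>] by blast
      then show ?thesis
        using True by (simp add: x y v_pivot)
    qed (simp add: x y v_pivot)
  qed
  moreover have "card I = (\<Sum>t=0..d4 X. s13 X t + 1)"
    by (simp add: I_def card_SigmaI)
  ultimately show ?thesis
    by simp
qed

lemma (in transcendental_U) dim_ge_right_coideal:
  assumes "right_coideal m q \<kappa> S" and "\<mu> \<noteq> 0"
    and "X \<in> S" and "X \<in> Umu \<mu>" and "X \<noteq> 0"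
  shows "dim_ge S (\<Sum>t=0..d4 X. s13 X t + 1)"
proof (rule dim_ge_lowered[where lbl = "\<lambda>w. \<mu> * inverse q ^ w"])
  show "inj (\<lambda>w. \<mu> * inverse q ^ w)"
    using \<open>\<mu> \<noteq> 0\<close> by (simp add: inj_def)
  show "lowered X \<mu> (\<mu> * inverse q ^ (i' + j')) i' j' k' \<in> S" for i' j' k'
    using right_coideal_slice[OF assms(1,3)] by (simp only: Delta_slice[OF assms(2,4), symmetric])
qed (use assms in auto)

theorem mainTheorem4:
  fixes q \<kappa> :: complex and m :: "U \<Rightarrow> U \<Rightarrow> U" and \<X> :: "U set"
    and \<mu> :: complex and X :: U
  assumes "\<not> algebraic q"
    and "\<kappa>\<^sup>2 = q"
    and "U_algebra q \<kappa> m"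
    and "right_coideal m q \<kappa> \<X>"
    and "\<mu> \<noteq> 0"
    and "X \<in> \<X>" and "X \<in> Umu \<mu>" and "X \<noteq> 0"
  shows "dim_ge \<X> (\<Sum>t=0..d4 X. s13 X t + 1)"
proof -
  interpret transcendental_U q \<kappa> m
    using assms(1-3) by unfold_locales
  show ?thesis
    using dim_ge_right_coideal assms(4-8) by blast
qed

end
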